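(* Let $(\mathbf x,\mathbf y,\mathbf z,s,u,t,\boldsymbol\delta,\boldsymbol\beta,\gamma)$ be any primal–dual feasible pair for (P-SOCP)/(D-SOCP) and let $C\subseteq[n]$ be nonempty. If $\|\mathbf q_{ij}\|\le\lambda$ for all $i,j\in C$ with $i<j$, then the minimizer $\mathbf x^*$ of (P) satisfies $\mathbf x_i^*=\mathbf x_j^*$ for all $i,j\in C$ (i.e. $C$ is a cluster or is contained in a cluster).
   Context: Data: integers $n\ge2$, $d\ge1$, points $\mathbf a_1,\dots,\mathbf a_n\in\mathbb R^d$, weights $r_1,\dots,r_n>0$, parameter $\lambda>0$; $\|\cdot\|$ Euclidean. Problem (P): minimize over $\mathbf x=(\mathbf x_1,\dots,\mathbf x_n)\in(\mathbb R^d)^n$ the strictly convex function $f'(\mathbf x)=\frac12\sum_ir_i\|\mathbf x_i-\mathbf a_i\|^2+\lambda\sum_{i<j}r_ir_j\|\mathbf x_i-\mathbf x_j\|$; its unique minimizer is $\mathbf x^*$; clusters are the equivalence classes of $i\sim j\iff\mathbf x_i^*=\mathbf x_j^*$. Antisymmetric index notation: given vectors $\mathbf v_{ij}$ for $i<j$, $\mathbf v_{\langle ij\rangle}=\mathbf v_{ij}$ ($i<j$), $-\mathbf v_{ji}$ ($i>j$), $\mathbf 0$ ($i=j$). (P-SOCP): variables $\mathbf x_i,\mathbf z_i\in\mathbb R^d$, $s_i,u_i\in\mathbb R$, $\mathbf y_{ij}\in\mathbb R^d$, $t_{ij}\in\mathbb R$ ($i<j$); minimize $\sum_i r_is_i+\lambda\sum_{i<j}r_ir_jt_{ij}$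 s.t. $\mathbf y_{ij}=\mathbf x_i-\mathbf x_j$, $\mathbf z_i=\mathbf x_i-\mathbf a_i$, $s_i=u_i+1$, $t_{ij}\ge\|\mathbf y_{ij}\|$, $s_i\ge\|(\mathbf z_i,u_i)\|$. (D-SOCP): variables $\boldsymbol\delta_{ij}$ ($i<j$), $\boldsymbol\beta_i\in\mathbb R^d$, $\gamma_i\in\mathbb R$; maximize $\sum_ir_i\mathbf a_i^T\boldsymbol\beta_i+\sum_ir_i\gamma_i$ s.t. $\sum_jr_j\boldsymbol\delta_{\langle ij\rangle}+\boldsymbol\beta_i=\mathbf 0$, $\|\boldsymbol\delta_{ij}\|\le\lambda$, $1-\gamma_i\ge\|(\boldsymbol\beta_i,\gamma_i)\|$. $\boldsymbol\sigma_2^i:=s_i\boldsymbol\beta_i+(1-\gamma_i)\mathbf z_i$, $\sigma_3^i:=s_i\gamma_i+(1-\gamma_i)u_i$, $\boldsymbol\omega_i:=\frac{\sigma_3^i}{s_i}\mathbf z_i+\frac1{s_i}\boldsymbol\sigma_2^i$, $r_C:=\sum_{i\in C}r_i$, and for $i<j$ in $C$: $\mathbf q_{ij}:=-\boldsymbol\delta_{ij}+\frac1{r_C}(\mathbf x_i-\mathbf x_j-\boldsymbol\omega_i+\boldsymbol\omega_j)-\frac1{r_C}\sum_{k\notin C}r_k(\boldsymbol\delta_{\langle ik\rangle}-\boldsymbol\delta_{\langle jk\rangle})$. *)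

theory Defs
  imports "HOL-Analysis.Analysis"
begin

text \<open>Indices are 0,...,n-1. Points live in an arbitrary Euclidean space 'a
  (playing the role of R^d, d = DIM('a) >= 1).\<close>

definition anti :: "(nat \<Rightarrow> nat \<Rightarrow> 'a::real_vector) \<Rightarrow> nat \<Rightarrow> nat \<Rightarrow> 'a" where
  "anti v i j = (if i < j then v i j else if j < i then - v j i else 0)"

definition fobj :: "nat \<Rightarrow> (nat \<Rightarrow> real) \<Rightarrow> (nat \<Rightarrow> 'a::euclidean_space) \<Rightarrow> real
    \<Rightarrow> (nat \<Rightarrow> 'a) \<Rightarrow> real" where
  "fobj n r a lam x =
     (1/2) * (\<Sum>i<n. r i * (norm (x i - a i))\<^sup>2)
     + lam * (\<Sum>i<n. \<Sum>j\<in>{i<..<n}. r i * r j * norm (x i - x j))"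

definition primal_feasible :: "nat \<Rightarrow> (nat \<Rightarrow> 'a::euclidean_space)
    \<Rightarrow> (nat \<Rightarrow> 'a) \<Rightarrow> (nat \<Rightarrow> nat \<Rightarrow> 'a) \<Rightarrow> (nat \<Rightarrow> 'a)
    \<Rightarrow> (nat \<Rightarrow> real) \<Rightarrow> (nat \<Rightarrow> real) \<Rightarrow> (nat \<Rightarrow> nat \<Rightarrow> real) \<Rightarrow> bool" where
  "primal_feasible n a x y z s u t \<longleftrightarrow>
     (\<forall>i<n. z i = x i - a i \<and> s i = u i + 1 \<and> norm (z i, u i) \<le> s i) \<and>
     (\<forall>i j. i < j \<and> j < n \<longrightarrow> y i j = x i - x j \<and> norm (y i j) \<le> t i j)"

definition dual_feasible :: "nat \<Rightarrow> (nat \<Rightarrow> real) \<Rightarrow> real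
    \<Rightarrow> (nat \<Rightarrow> nat \<Rightarrow> 'a::euclidean_space) \<Rightarrow> (nat \<Rightarrow> 'a) \<Rightarrow> (nat \<Rightarrow> real) \<Rightarrow> bool" where
  "dual_feasible n r lam \<delta> \<beta> \<gamma> \<longleftrightarrow>
     (\<forall>i<n. (\<Sum>j<n. r j *\<^sub>R anti \<delta> i j) + \<beta> i = 0 \<and> norm (\<beta> i, \<gamma> i) \<le> 1 - \<gamma> i) \<and>
     (\<forall>i j. i < j \<and> j < n \<longrightarrow> norm (\<delta> i j) \<le> lam)"

definition sigma2 :: "(nat \<Rightarrow> real) \<Rightarrow> (nat \<Rightarrow> 'a::real_vector) \<Rightarrow> (nat \<Rightarrow> real)
    \<Rightarrow> (nat \<Rightarrow> 'a) \<Rightarrow> nat \<Rightarrow> 'a" where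
  "sigma2 s \<beta> \<gamma> z i = s i *\<^sub>R \<beta> i + (1 - \<gamma> i) *\<^sub>R z i"

definition sigma3 :: "(nat \<Rightarrow> real) \<Rightarrow> (nat \<Rightarrow> real) \<Rightarrow> (nat \<Rightarrow> real) \<Rightarrow> nat \<Rightarrow> real" where
  "sigma3 s \<gamma> u i = s i * \<gamma> i + (1 - \<gamma> i) * u i"

definition omega :: "(nat \<Rightarrow> real) \<Rightarrow> (nat \<Rightarrow> 'a::real_vector) \<Rightarrow> (nat \<Rightarrow> real)
    \<Rightarrow> (nat \<Rightarrow> 'a) \<Rightarrow> (nat \<Rightarrow> real) \<Rightarrow> nat \<Rightarrow> 'a" where
  "omega s \<beta> \<gamma> z u i =
     (sigma3 s \<gamma> u i / s i) *\<^sub>R z i + (1 / s i) *\<^sub>R sigma2 s \<beta> \<gamma> z i"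

definition qvec :: "nat \<Rightarrow> (nat \<Rightarrow> real) \<Rightarrow> nat set \<Rightarrow> (nat \<Rightarrow> 'a::real_vector)
    \<Rightarrow> (nat \<Rightarrow> 'a) \<Rightarrow> (nat \<Rightarrow> real) \<Rightarrow> (nat \<Rightarrow> real)
    \<Rightarrow> (nat \<Rightarrow> nat \<Rightarrow> 'a) \<Rightarrow> (nat \<Rightarrow> 'a) \<Rightarrow> (nat \<Rightarrow> real) \<Rightarrow> nat \<Rightarrow> nat \<Rightarrow> 'a" where
  "qvec n r C x z s u \<delta> \<beta> \<gamma> i j =
     - \<delta> i j
     + (1 / sum r C) *\<^sub>R (x i - x j - omega s \<beta> \<gamma> z u i + omega s \<beta> \<gamma> z u j)
     - (1 / sum r C) *\<^sub>R (\<Sum>k\<in>{..<n} - C. r k *\<^sub>R (anti \<delta> i k - anti \<delta> j k))"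

end

theory Submission imports Defs begin

text \<open>Since omega_i = x_i - a_i + beta_i, dual feasibility turns G i j = q_<ij> (i, j in C)
  into an antisymmetric family of norm at most lambda with
  sum_(j in C) r_j G i j = a_i - a_C, a_C the r-weighted mean of a over C.
  Such a family certifies that moving every x_i, i in C, to the weighted mean m of the
  x_i lowers f' by at least 1/2 sum_(i in C) r_i ||x_i - m||^2: a weighted-variance
  identity controls the fidelity term up to sum_(i in C) r_i <a_i - a_C, x_i>, which by
  Cauchy-Schwarz is dominated by the fusion terms inside C (these vanish at m), and the
  fusion terms between C and its complement do not grow by the triangle inequality.
  At the minimiser this decrease must be zero.\<close>

definition wmean :: "('i \<Rightarrow> real) \<Rightarrow> 'i set \<Rightarrow> ('i \<Rightarrow> 'a::real_vector) \<Rightarrow> 'a" where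
  "wmean r C v = (1 / sum r C) *\<^sub>R (\<Sum>i\<in>C. r i *\<^sub>R v i)"

lemma anti_swap: "anti v i j = - anti v j i"
  by (auto simp: anti_def)

lemma sum_sum_antisym_eq_0:
  fixes f :: "'i \<Rightarrow> 'i \<Rightarrow> 'a::real_vector"
  assumes antisym: "\<And>i j. i \<in> C \<Longrightarrow> j \<in> C \<Longrightarrow> f j i = - f i j"
  shows "(\<Sum>i\<in>C. \<Sum>j\<in>C. f i j) = 0"
proof -
  let ?S = "\<Sum>i\<in>C. \<Sum>j\<in>C. f i j"
  have "?S = (\<Sum>j\<in>C. \<Sum>i\<in>C. f i j)" by (rule sum.swap)
  also have "\<dots> = (\<Sum>j\<in>C. \<Sum>i\<in>C. - f j i)"
    by (intro sum.cong refl) (metis antisym)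
  also have "\<dots> = - ?S"
    by (simp add: sum_negf)
  finally have "2 *\<^sub>R ?S = 0"
    by (metis eq_neg_iff_add_eq_0 scaleR_2)
  then show ?thesis by simp
qed

lemma sum_inner_antisym:
  fixes G :: "'i \<Rightarrow> 'i \<Rightarrow> 'a::real_inner"
  assumes antisym: "\<And>i j. i \<in> C \<Longrightarrow> j \<in> C \<Longrightarrow> G j i = - G i j"
  shows "(\<Sum>i\<in>C. \<Sum>j\<in>C. r i * r j * inner (G i j) (w i - w j))
       = 2 * (\<Sum>i\<in>C. r i * inner (\<Sum>j\<in>C. r j *\<^sub>R G i j) (w i))"
proof -
  have "(\<Sum>i\<in>C. \<Sum>j\<in>C. r i * r j * inner (G i j) (w j))
        = (\<Sum>j\<in>C. \<Sum>i\<in>C. - (r j * r i * inner (G j i) (w j)))"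
    by (subst sum.swap) (intro sum.cong refl, metis antisym inner_minus_left mult.commute mult_minus_right)
  also have "\<dots> = - (\<Sum>i\<in>C. \<Sum>j\<in>C. r i * r j * inner (G i j) (w i))"
    by (simp add: sum_negf)
  finally have "(\<Sum>i\<in>C. \<Sum>j\<in>C. r i * r j * inner (G i j) (w j))
      = - (\<Sum>i\<in>C. \<Sum>j\<in>C. r i * r j * inner (G i j) (w i))" .
  moreover have "(\<Sum>i\<in>C. r i * inner (\<Sum>j\<in>C. r j *\<^sub>R G i j) (w i))
      = (\<Sum>i\<in>C. \<Sum>j\<in>C. r i * r j * inner (G i j) (w i))"
    by (simp add: inner_sum_left sum_distrib_left mult.assoc)
  ultimately show ?thesis
    by (simp add: inner_diff_right right_diff_distrib sum_subtractf)
qed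

lemma norm_wmean_diff_le:
  assumes "finite C" "sum r C > 0" "\<And>i. i \<in> C \<Longrightarrow> r i \<ge> 0"
  shows "sum r C * norm (wmean r C v - c) \<le> (\<Sum>i\<in>C. r i * norm (v i - c))"
proof -
  have "sum r C *\<^sub>R (wmean r C v - c) = (\<Sum>i\<in>C. r i *\<^sub>R (v i - c))"
    using assms(2) by (simp add: wmean_def scaleR_diff_right sum_subtractf scaleR_sum_left)
  then have "sum r C * norm (wmean r C v - c) = norm (\<Sum>i\<in>C. r i *\<^sub>R (v i - c))"
    using assms(2) by (metis abs_of_pos norm_scaleR)
  also have "\<dots> \<le> (\<Sum>i\<in>C. norm (r i *\<^sub>R (v i - c)))" by (rule norm_sum)
  also have "\<dots> = (\<Sum>i\<in>C. r i * norm (v i - c))"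
    using assms(3) by (intro sum.cong) auto
  finally show ?thesis .
qed

text \<open>Both sides equal 1/2 sum r_i ||x_i||^2 + 1/2 sum r_i ||a_i||^2 - r_C <x_C, a_C>,
  with x_C, a_C the weighted means.\<close>

lemma weighted_variance_identity:
  fixes x a :: "'i \<Rightarrow> 'a::real_inner"
  assumes "sum r C \<noteq> 0"
  shows "(1/2) * (\<Sum>i\<in>C. r i * (norm (x i - a i))\<^sup>2) + (\<Sum>i\<in>C. r i * inner (a i - wmean r C a) (x i))
       = (1/2) * (\<Sum>i\<in>C. r i * (norm (wmean r C x - a i))\<^sup>2)
         + (1/2) * (\<Sum>i\<in>C. r i * (norm (x i - wmean r C x))\<^sup>2)"
proof -
  define R where "R = sum r C"
  define X where "X = (\<Sum>i\<in>C. r i *\<^sub>R x i)"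
  define A where "A = (\<Sum>i\<in>C. r i *\<^sub>R a i)"
  define Sxx where "Sxx = (\<Sum>i\<in>C. r i * inner (x i) (x i))"
  define Saa where "Saa = (\<Sum>i\<in>C. r i * inner (a i) (a i))"
  define Sxa where "Sxa = (\<Sum>i\<in>C. r i * inner (x i) (a i))"
  have mean: "wmean r C x = (1/R) *\<^sub>R X" "wmean r C a = (1/R) *\<^sub>R A"
    by (simp_all add: wmean_def R_def X_def A_def)
  have expand: "\<And>p q. (norm (p - q))\<^sup>2 = inner p p - 2 * inner p q + inner q q"
    by (simp add: power2_norm_eq_inner inner_diff_left inner_diff_right inner_commute)
  have h1: "(\<Sum>i\<in>C. r i * (norm (x i - a i))\<^sup>2) = Sxx - 2 * Sxa + Saa"
    by (simp add: expand Sxx_def Saa_def Sxa_def algebra_simps sum.distrib sum_subtractf sum_distrib_left)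
  have h2: "(\<Sum>i\<in>C. r i * inner (a i - wmean r C a) (x i)) = Sxa - inner (wmean r C a) X"
    by (simp add: X_def Sxa_def inner_diff_left inner_commute inner_sum_right algebra_simps sum_subtractf)
  have h3: "(\<Sum>i\<in>C. r i * (norm (wmean r C x - a i))\<^sup>2)
      = R * inner (wmean r C x) (wmean r C x) - 2 * inner (wmean r C x) A + Saa"
    by (simp add: expand R_def A_def Saa_def algebra_simps sum.distrib sum_subtractf
        sum_distrib_left sum_distrib_right inner_sum_right)
  have h4: "(\<Sum>i\<in>C. r i * (norm (x i - wmean r C x))\<^sup>2)
      = Sxx - 2 * inner (wmean r C x) X + R * inner (wmean r C x) (wmean r C x)"
    by (simp add: expand R_def X_def Sxx_def inner_commute algebra_simps sum.distrib sum_subtractf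
        sum_distrib_left sum_distrib_right inner_sum_right)
  have inners: "inner (wmean r C x) (wmean r C x) = inner X X / R\<^sup>2" "inner (wmean r C x) A = inner X A / R"
    "inner (wmean r C a) X = inner X A / R" "inner (wmean r C x) X = inner X X / R"
    by (simp_all add: mean power2_eq_square inner_commute)
  have "R \<noteq> 0" using assms by (simp add: R_def)
  then show ?thesis
    unfolding h1 h2 h3 h4 inners by (simp add: field_simps power2_eq_square)
qed

lemma sum_inner_antisym_le:
  fixes G :: "'i \<Rightarrow> 'i \<Rightarrow> 'a::real_inner"
  assumes antisym: "\<And>i j. i \<in> C \<Longrightarrow> j \<in> C \<Longrightarrow> G j i = - G i j"
    and bound: "\<And>i j. i \<in> C \<Longrightarrow> j \<in> C \<Longrightarrow> norm (G i j) \<le> lam"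
    and r: "\<And>i. i \<in> C \<Longrightarrow> r i \<ge> 0"
  shows "2 * (\<Sum>i\<in>C. r i * inner (\<Sum>j\<in>C. r j *\<^sub>R G i j) (w i))
       \<le> lam * (\<Sum>i\<in>C. \<Sum>j\<in>C. r i * r j * norm (w i - w j))"
proof -
  have "r i * r j * inner (G i j) (w i - w j) \<le> lam * (r i * r j * norm (w i - w j))"
    if "i \<in> C" "j \<in> C" for i j
  proof -
    have "inner (G i j) (w i - w j) \<le> norm (G i j) * norm (w i - w j)"
      by (rule norm_cauchy_schwarz)
    also have "\<dots> \<le> lam * norm (w i - w j)"
      using bound[OF that] by (simp add: mult_right_mono)
    finally have "(r i * r j) * inner (G i j) (w i - w j) \<le> (r i * r j) * (lam * norm (w i - w j))"
      using r[OF that(1)] r[OF that(2)] by (intro mult_left_mono) auto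
    then show ?thesis
      by (simp add: algebra_simps)
  qed
  then have "(\<Sum>i\<in>C. \<Sum>j\<in>C. r i * r j * inner (G i j) (w i - w j))
      \<le> lam * (\<Sum>i\<in>C. \<Sum>j\<in>C. r i * r j * norm (w i - w j))"
    unfolding sum_distrib_left by (intro sum_mono) auto
  then show ?thesis
    by (simp only: sum_inner_antisym[OF antisym])
qed

lemma sum_cross_wmean_le:
  assumes "finite C" "sum r C > 0" "\<And>i. i \<in> C \<Longrightarrow> r i \<ge> 0" "\<And>j. j \<in> D \<Longrightarrow> r j \<ge> 0"
  shows "(\<Sum>i\<in>C. \<Sum>j\<in>D. r i * r j * norm (wmean r C v - v j))
       \<le> (\<Sum>i\<in>C. \<Sum>j\<in>D. r i * r j * norm (v i - v j))"
proof -
  have "(\<Sum>i\<in>C. \<Sum>j\<in>D. r i * r j * norm (wmean r C v - v j))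
      = (\<Sum>j\<in>D. r j * (sum r C * norm (wmean r C v - v j)))"
    by (subst sum.swap) (simp add: sum_distrib_left sum_distrib_right mult.assoc mult.left_commute)
  also have "\<dots> \<le> (\<Sum>j\<in>D. r j * (\<Sum>i\<in>C. r i * norm (v i - v j)))"
    using assms by (intro sum_mono mult_left_mono norm_wmean_diff_le) auto
  also have "\<dots> = (\<Sum>i\<in>C. \<Sum>j\<in>D. r i * r j * norm (v i - v j))"
    by (subst sum.swap) (simp add: sum_distrib_left mult.assoc mult.left_commute)
  finally show ?thesis .
qed

lemma sum_upper_pairs_eq_half:
  fixes f :: "nat \<Rightarrow> nat \<Rightarrow> real"
  assumes sym: "\<And>i j. f i j = f j i" and diag: "\<And>i. f i i = 0"
  shows "(\<Sum>i<n. \<Sum>j\<in>{i<..<n}. f i j) = (1/2) * (\<Sum>i<n. \<Sum>j<n. f i j)"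
proof (induction n)
  case 0
  show ?case by simp
next
  case (Suc n)
  have "{i<..<Suc n} = insert n {i<..<n}" if "i < n" for i
    using that by auto
  moreover have "{n<..<Suc n} = {}" by auto
  ultimately have "(\<Sum>i<Suc n. \<Sum>j\<in>{i<..<Suc n}. f i j)
      = (\<Sum>i<n. \<Sum>j\<in>{i<..<n}. f i j) + (\<Sum>i<n. f i n)"
    by (simp add: sum.distrib)
  moreover have "(\<Sum>i<Suc n. \<Sum>j<Suc n. f i j) = (\<Sum>i<n. \<Sum>j<n. f i j) + 2 * (\<Sum>i<n. f i n)"
    using sym[of n] by (simp add: sum.distrib diag)
  ultimately show ?case
    using Suc.IH by simp
qed

lemma fobj_split:
  fixes x a :: "nat \<Rightarrow> 'a::euclidean_space"
  assumes "C \<subseteq> {..<n}"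
  defines "N \<equiv> {..<n} - C"
  shows "fobj n r a lam x =
    (1/2) * (\<Sum>i\<in>C. r i * (norm (x i - a i))\<^sup>2) + (1/2) * (\<Sum>i\<in>N. r i * (norm (x i - a i))\<^sup>2)
    + lam/2 * ((\<Sum>i\<in>C. \<Sum>j\<in>C. r i * r j * norm (x i - x j))
        + 2 * (\<Sum>i\<in>C. \<Sum>j\<in>N. r i * r j * norm (x i - x j))
        + (\<Sum>i\<in>N. \<Sum>j\<in>N. r i * r j * norm (x i - x j)))"
proof -
  define h where "h i j = r i * r j * norm (x i - x j)" for i j
  have split: "sum g {..<n} = sum g C + sum g N" for g :: "nat \<Rightarrow> real"
    using sum.subset_diff[OF assms(1) finite_lessThan, of g] by (simp add: N_def add.commute)
  have "(\<Sum>i\<in>N. \<Sum>j\<in>C. h i j) = (\<Sum>i\<in>C. \<Sum>j\<in>N. h i j)"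
    by (subst sum.swap) (simp add: h_def norm_minus_commute mult.commute)
  then have "(\<Sum>i<n. \<Sum>j<n. h i j)
      = (\<Sum>i\<in>C. \<Sum>j\<in>C. h i j) + 2 * (\<Sum>i\<in>C. \<Sum>j\<in>N. h i j) + (\<Sum>i\<in>N. \<Sum>j\<in>N. h i j)"
    by (simp add: split sum.distrib)
  moreover have "(\<Sum>i<n. \<Sum>j\<in>{i<..<n}. h i j) = (1/2) * (\<Sum>i<n. \<Sum>j<n. h i j)"
    by (rule sum_upper_pairs_eq_half) (auto simp: h_def norm_minus_commute)
  ultimately show ?thesis
    unfolding fobj_def split[of "\<lambda>i. r i * (norm (x i - a i))\<^sup>2"] h_def[symmetric]
    by (simp add: algebra_simps)
qed

lemma fobj_merge_cluster_le:
  fixes a w :: "nat \<Rightarrow> 'a::euclidean_space" and G :: "nat \<Rightarrow> nat \<Rightarrow> 'a"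
  assumes C: "C \<subseteq> {..<n}" and rC: "sum r C > 0" and r: "\<And>i. i < n \<Longrightarrow> r i \<ge> 0"
    and lam: "lam \<ge> 0"
    and antisym: "\<And>i j. i \<in> C \<Longrightarrow> j \<in> C \<Longrightarrow> G j i = - G i j"
    and bound: "\<And>i j. i \<in> C \<Longrightarrow> j \<in> C \<Longrightarrow> norm (G i j) \<le> lam"
    and balance: "\<And>i. i \<in> C \<Longrightarrow> (\<Sum>j\<in>C. r j *\<^sub>R G i j) = a i - wmean r C a"
  shows "fobj n r a lam (\<lambda>i. if i \<in> C then wmean r C w else w i)
           + (1/2) * (\<Sum>i\<in>C. r i * (norm (w i - wmean r C w))\<^sup>2)
         \<le> fobj n r a lam w"
proof -
  define m where "m = wmean r C w"
  define w' where "w' i = (if i \<in> C then m else w i)" for i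
  define N where "N = {..<n} - C"
  have finC: "finite C" using C finite_subset by blast
  have rC0: "r i \<ge> 0" if "i \<in> C" for i using r C that by auto
  have rN0: "r i \<ge> 0" if "i \<in> N" for i using r that by (auto simp: N_def)
  have [simp]: "w' i = w i" if "i \<in> N" for i using that by (simp add: w'_def N_def)
  have [simp]: "w' i = m" if "i \<in> C" for i using that by (simp add: w'_def)
  have cross: "(\<Sum>i\<in>C. \<Sum>j\<in>N. r i * r j * norm (w' i - w' j))
      \<le> (\<Sum>i\<in>C. \<Sum>j\<in>N. r i * r j * norm (w i - w j))"
    using sum_cross_wmean_le[OF finC rC rC0 rN0, where v=w] by (simp add: m_def)
  have gain: "2 * (\<Sum>i\<in>C. r i * inner (a i - wmean r C a) (w i))
      \<le> lam * (\<Sum>i\<in>C. \<Sum>j\<in>C. r i * r j * norm (w i - w j))"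
    using sum_inner_antisym_le[where C=C and G=G and r=r and w=w, OF antisym bound rC0]
    by (simp add: balance)
  have variance: "(1/2) * (\<Sum>i\<in>C. r i * (norm (w i - a i))\<^sup>2) + (\<Sum>i\<in>C. r i * inner (a i - wmean r C a) (w i))
      = (1/2) * (\<Sum>i\<in>C. r i * (norm (w' i - a i))\<^sup>2) + (1/2) * (\<Sum>i\<in>C. r i * (norm (w i - m))\<^sup>2)"
    using weighted_variance_identity[of r C w a] rC by (simp add: m_def)
  show ?thesis
    using fobj_split[OF C, of r a lam w] fobj_split[OF C, of r a lam w'] variance gain
      mult_left_mono[OF cross lam]
    unfolding N_def[symmetric] w'_def[symmetric] m_def[symmetric]
    by (simp add: algebra_simps)
qed

lemma fobj_minimizer_cluster:
  fixes a xstar :: "nat \<Rightarrow> 'a::euclidean_space" and G :: "nat \<Rightarrow> nat \<Rightarrow> 'a"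
  assumes min: "\<And>w. fobj n r a lam xstar \<le> fobj n r a lam w"
    and C: "C \<subseteq> {..<n}" "C \<noteq> {}" and r: "\<And>i. i < n \<Longrightarrow> r i > 0" and lam: "lam \<ge> 0"
    and antisym: "\<And>i j. i \<in> C \<Longrightarrow> j \<in> C \<Longrightarrow> G j i = - G i j"
    and bound: "\<And>i j. i \<in> C \<Longrightarrow> j \<in> C \<Longrightarrow> norm (G i j) \<le> lam"
    and balance: "\<And>i. i \<in> C \<Longrightarrow> (\<Sum>j\<in>C. r j *\<^sub>R G i j) = a i - wmean r C a"
    and i: "i \<in> C"
  shows "xstar i = wmean r C xstar"
proof -
  have finC: "finite C" using C(1) finite_subset by blast
  have rC: "r i > 0" if "i \<in> C" for i using r C(1) that by auto
  have "sum r C > 0" using finC C(2) rC by (simp add: sum_pos)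
  then have "(\<Sum>i\<in>C. r i * (norm (xstar i - wmean r C xstar))\<^sup>2) \<le> 0"
    using fobj_merge_cluster_le[OF C(1) _ _ lam antisym bound balance, of xstar]
      min[of "\<lambda>i. if i \<in> C then wmean r C xstar else xstar i"] r
    by (force simp: less_imp_le)
  moreover have "0 \<le> r i * (norm (xstar i - wmean r C xstar))\<^sup>2" if "i \<in> C" for i
    using rC[OF that] by simp
  ultimately have "r i * (norm (xstar i - wmean r C xstar))\<^sup>2 = 0"
    using sum_nonneg_eq_0_iff[OF finC] i by (metis (no_types, lifting) antisym_conv sum_nonneg)
  then show ?thesis
    using rC[OF i] by simp
qed

lemma omega_eq:
  assumes "s i = u i + 1" "s i \<noteq> 0"
  shows "omega s \<beta> \<gamma> z u i = z i + \<beta> i"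
proof -
  define c where "c = (s i * \<gamma> i + (1 - \<gamma> i) * u i) / s i"
  have one: "c + (1 - \<gamma> i) / s i = 1"
    using assms by (simp add: c_def add_divide_distrib[symmetric] algebra_simps)
  have "omega s \<beta> \<gamma> z u i = c *\<^sub>R z i + (\<beta> i + ((1 - \<gamma> i) / s i) *\<^sub>R z i)"
    using assms(2) by (simp add: omega_def sigma2_def sigma3_def c_def scaleR_add_right)
  also have "\<dots> = (c + (1 - \<gamma> i) / s i) *\<^sub>R z i + \<beta> i"
    by (simp add: scaleR_add_left)
  finally show ?thesis
    by (simp only: one scaleR_one)
qed

lemma primal_feasible_omega:
  assumes "primal_feasible n a x y z s u t" "i < n"
  shows "omega s \<beta> \<gamma> z u i = x i - a i + \<beta> i"
proof -
  have z: "z i = x i - a i" and s: "s i = u i + 1" and cone: "norm (z i, u i) \<le> s i"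
    using assms unfolding primal_feasible_def by auto
  have "\<bar>u i\<bar> \<le> s i"
    using norm_snd_le[of "u i" "z i"] cone by simp
  then have "s i \<noteq> 0" using s by linarith
  then show ?thesis
    using omega_eq[of s i u \<beta> \<gamma> z, OF s] z by simp
qed

text \<open>Only a survives of the primal data: x_i - omega_i = a_i - beta_i, and by the dual
  equality constraint -beta_i minus the outside-C sum in q is the inside-C sum.\<close>

lemma qvec_eq:
  assumes pf: "primal_feasible n a x y z s u t" and df: "dual_feasible n r lam \<delta> \<beta> \<gamma>"
    and C: "C \<subseteq> {..<n}" and i: "i \<in> C" and j: "j \<in> C"
  shows "qvec n r C x z s u \<delta> \<beta> \<gamma> i j = - \<delta> i j + (1 / sum r C) *\<^sub>R
           ((a i + (\<Sum>k\<in>C. r k *\<^sub>R anti \<delta> i k)) - (a j + (\<Sum>k\<in>C. r k *\<^sub>R anti \<delta> j k)))"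
proof -
  define N where "N = {..<n} - C"
  have beta: "\<beta> l = - ((\<Sum>k\<in>C. r k *\<^sub>R anti \<delta> l k) + (\<Sum>k\<in>N. r k *\<^sub>R anti \<delta> l k))"
    if "l < n" for l
  proof -
    have "(\<Sum>k<n. r k *\<^sub>R anti \<delta> l k) + \<beta> l = 0"
      using df that unfolding dual_feasible_def by blast
    moreover have "(\<Sum>k<n. r k *\<^sub>R anti \<delta> l k)
        = (\<Sum>k\<in>C. r k *\<^sub>R anti \<delta> l k) + (\<Sum>k\<in>N. r k *\<^sub>R anti \<delta> l k)"
      using sum.subset_diff[OF C finite_lessThan] by (simp add: N_def add.commute)
    ultimately have "\<beta> l + ((\<Sum>k\<in>C. r k *\<^sub>R anti \<delta> l k) + (\<Sum>k\<in>N. r k *\<^sub>R anti \<delta> l k)) = 0"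
      by (simp add: add.commute)
    then show ?thesis
      by (rule eq_neg_iff_add_eq_0[THEN iffD2])
  qed
  have "i < n" "j < n" using C i j by auto
  then show ?thesis
    unfolding qvec_def N_def[symmetric]
    by (simp add: primal_feasible_omega[OF pf] beta algebra_simps scaleR_diff_right sum_subtractf)
qed

lemma sum_anti_qvec:
  assumes pf: "primal_feasible n a x y z s u t" and df: "dual_feasible n r lam \<delta> \<beta> \<gamma>"
    and C: "C \<subseteq> {..<n}" and rC: "sum r C \<noteq> 0" and i: "i \<in> C"
  shows "(\<Sum>j\<in>C. r j *\<^sub>R anti (qvec n r C x z s u \<delta> \<beta> \<gamma>) i j) = a i - wmean r C a"
proof -
  define R where "R = sum r C"
  define P where "P l = a l + (\<Sum>k\<in>C. r k *\<^sub>R anti \<delta> l k)" for l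
  have anti_q: "anti (qvec n r C x z s u \<delta> \<beta> \<gamma>) i j = - anti \<delta> i j + (1/R) *\<^sub>R (P i - P j)"
    if "j \<in> C" for j
    using qvec_eq[OF pf df C i that] qvec_eq[OF pf df C that i]
    by (cases i j rule: linorder_cases) (simp_all add: anti_def P_def R_def algebra_simps)
  have "(\<Sum>j\<in>C. r j *\<^sub>R P j) = (\<Sum>j\<in>C. r j *\<^sub>R a j)
      + (\<Sum>j\<in>C. \<Sum>k\<in>C. (r j * r k) *\<^sub>R anti \<delta> j k)"
    by (simp add: P_def scaleR_add_right sum.distrib scaleR_sum_right)
  also have "(\<Sum>j\<in>C. \<Sum>k\<in>C. (r j * r k) *\<^sub>R anti \<delta> j k) = 0"
    by (rule sum_sum_antisym_eq_0) (metis anti_swap mult.commute scaleR_minus_right)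
  finally have "(\<Sum>j\<in>C. r j *\<^sub>R P j) = R *\<^sub>R wmean r C a"
    using rC by (simp add: wmean_def R_def)
  have "(\<Sum>j\<in>C. r j *\<^sub>R anti (qvec n r C x z s u \<delta> \<beta> \<gamma>) i j)
      = (\<Sum>j\<in>C. - (r j *\<^sub>R anti \<delta> i j) + (1/R) *\<^sub>R (r j *\<^sub>R P i) - (1/R) *\<^sub>R (r j *\<^sub>R P j))"
    by (intro sum.cong refl) (simp add: anti_q algebra_simps)
  also have "\<dots> = - (\<Sum>j\<in>C. r j *\<^sub>R anti \<delta> i j) + (1/R) *\<^sub>R (R *\<^sub>R P i) - (1/R) *\<^sub>R (\<Sum>j\<in>C. r j *\<^sub>R P j)"
    unfolding R_def by (simp add: sum.distrib sum_subtractf sum_negf scaleR_sum_right scaleR_sum_left)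
  also have "\<dots> = a i - wmean r C a"
    using rC \<open>_ = R *\<^sub>R wmean r C a\<close> by (simp add: P_def R_def)
  finally show ?thesis .
qed

theorem mainTheorem2:
  fixes n :: nat and a :: "nat \<Rightarrow> 'a::euclidean_space" and r :: "nat \<Rightarrow> real"
    and lam :: real and xstar :: "nat \<Rightarrow> 'a"
    and x z :: "nat \<Rightarrow> 'a" and y :: "nat \<Rightarrow> nat \<Rightarrow> 'a"
    and s u :: "nat \<Rightarrow> real" and t :: "nat \<Rightarrow> nat \<Rightarrow> real"
    and \<delta> :: "nat \<Rightarrow> nat \<Rightarrow> 'a" and \<beta> :: "nat \<Rightarrow> 'a" and \<gamma> :: "nat \<Rightarrow> real"
    and C :: "nat set"
  assumes n2: "n \<ge> 2"
    and rpos: "\<forall>i<n. r i > 0"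
    and lampos: "lam > 0"
    and xstar_min: "\<forall>w :: nat \<Rightarrow> 'a. fobj n r a lam xstar \<le> fobj n r a lam w"
    and pfeas: "primal_feasible n a x y z s u t"
    and dfeas: "dual_feasible n r lam \<delta> \<beta> \<gamma>"
    and C_sub: "C \<subseteq> {..<n}" and C_ne: "C \<noteq> {}"
    and q_bound: "\<forall>i\<in>C. \<forall>j\<in>C. i < j \<longrightarrow> norm (qvec n r C x z s u \<delta> \<beta> \<gamma> i j) \<le> lam"
  shows "\<forall>i\<in>C. \<forall>j\<in>C. xstar i = xstar j"
proof -
  define q where "q = qvec n r C x z s u \<delta> \<beta> \<gamma>"
  have finC: "finite C" using C_sub finite_subset by blast
  have "sum r C > 0" using finC C_ne C_sub rpos by (intro sum_pos) auto
  have bound: "norm (anti q i j) \<le> lam" if "i \<in> C" "j \<in> C" for i j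
    using q_bound that lampos by (cases i j rule: linorder_cases) (auto simp: anti_def q_def)
  have balance: "(\<Sum>j\<in>C. r j *\<^sub>R anti q i j) = a i - wmean r C a" if "i \<in> C" for i
    unfolding q_def using sum_anti_qvec[OF pfeas dfeas C_sub _ that] \<open>sum r C > 0\<close> by simp
  have "xstar i = wmean r C xstar" if "i \<in> C" for i
    using xstar_min C_sub C_ne rpos lampos bound balance that
    by (intro fobj_minimizer_cluster[where G = "anti q"]) (auto intro: anti_swap)
  then show ?thesis by simp
qed

end
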